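(* Let $\mathcal{X}$, $f_i$, $\underline{y},\overline{y}$ be as in the context, and consider problem (SCP): $\min_{(y,x)\in\mathcal{X}}\sum_{i=1}^{n_y}f_i(y_i)+\sum_{\omega\in\Omega_1}p_\omega c_\omega^Tx_\omega$. Run the adaptive piecewise linear approximation algorithm described in the context, and assume that in every iteration $s$ the subproblem in step 3 is solved to an optimal solution $(\tilde{y}^s,\tilde{x}^s)$ that is an extreme point of $\mathcal{X}(\tilde{y}^s)=\{(y,x)\in\mathcal{X}: y_i=\tilde{y}^s_i\ \forall i\le n_{\mathrm{I}}\}$. Then the algorithm terminates after finitely many iterations, and the point it returns is a global optimum of (SCP).
   Context: Let $\Omega_1$ be a finite index set, $n_y\geq n_{\mathrm{I}}\geq0$ integers, $A\in\mathbb{R}^{m_1\times n_y}$, $b\in\mathbb{R}^{m_1}$, $D\in\mathbb{R}^{m_2\times n_y}$, and for each $\omega\in\Omega_1$: $p_\omega\in\mathbb{R}$, $c_\omega\in\mathbb{R}^{n_x}$, $B_\omega\in\mathbb{R}^{m_2\times n_x}$, $d_\omega\in\mathbb{R}^{m_2}$. $\mathcal{X}=\{(y,\{x_\omega\}_{\omega\in\Omega_1})\geq0: y\in\mathbb{Z}^{n_{\mathrm{I}}}\times\mathbb{R}^{n_y-n_{\mathrm{I}}},\ Ay=b,\ B_\omega x_\omega+Dy=d_\omega\ \forall\omega\}$ is assumed nonempty and bounded, with vectors $\underline{y},\overline{y}$ such that $\underline{y}\leq y\leq\overline{y}$ for all $(y,x)\in\mathcal{X}$. It is also assumed that for every $y\geq0$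 with $y\in\mathbb{Z}^{n_{\mathrm{I}}}\times\mathbb{R}^{n_y-n_{\mathrm{I}}}$ and $Ay=b$, and every $\omega$, the set $\{x\geq0:B_\omega x=d_\omega-Dy\}$ is nonempty. The $f_i:\mathbb{R}\to\mathbb{R}$ are concave and lower semicontinuous. Given breakpoints $y_i^{(1)}<\dots<y_i^{(k_i)}$, the piecewise linear function $\overline{f}_i$ on $[y_i^{(1)},y_i^{(k_i)}]$ is $\overline{f}_i(y_i)=\frac{f_i(y_i^{(j+1)})-f_i(y_i^{(j)})}{y_i^{(j+1)}-y_i^{(j)}}(y_i-y_i^{(j)})+f_i(y_i^{(j)})$ for $y_i\in[y_i^{(j)},y_i^{(j+1)}]$. Algorithm: (1) For each $i$ set breakpoints $(y_i^{(1)},y_i^{(2)})=(\underline{y}_i,\overline{y}_i)$, $k_i=2$; set $s=1$. (2) For each $i$ construct $\overline{f}^s_i$ from the current breakpoints. (3) Solve $\min_{(y,x)\in\mathcal{X}}\sum_i\overline{f}^s_i(y_i)+\sum_\omega p_\omega c_\omega^Tx_\omega$ to an optimal solution $(\tilde{y}^s,\{\tilde{x}^s_\omega\})$. (4) If $\overline{f}^s_i(\tilde{y}^s_i)\geq f_i(\tilde{y}^s_i)$ for all $i$, stop and return $(\tilde{y}^s,\{\tilde{x}^s_\omega\})$. (5) Otherwise, for each $i$ with $\overline{f}^s_i(\tilde{y}^s_i)<f_i(\tilde{y}^s_i)$, add $\tilde{y}^s_i$ as a new breakpoint ($k_i\leftarrow k_i+1$) and re-sort the breakpoints increasingly. (6)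 Set $s\leftarrow s+1$ and go to (2). *)

theory Defs
  imports "HOL-Analysis.Analysis"
begin

text \<open>Feasible set of (SCP). Vectors are functions on nat; components outside the
  index ranges (j >= ny for y, j >= nx or omega outside Omega for x) are fixed to 0.\<close>
definition scp_feasible ::
  "'w set \<Rightarrow> nat \<Rightarrow> nat \<Rightarrow> nat \<Rightarrow> nat \<Rightarrow> nat \<Rightarrow>
   (nat \<Rightarrow> nat \<Rightarrow> real) \<Rightarrow> (nat \<Rightarrow> real) \<Rightarrow> (nat \<Rightarrow> nat \<Rightarrow> real) \<Rightarrow>
   ('w \<Rightarrow> nat \<Rightarrow> nat \<Rightarrow> real) \<Rightarrow> ('w \<Rightarrow> nat \<Rightarrow> real) \<Rightarrow>
   ((nat \<Rightarrow> real) \<times> ('w \<Rightarrow> nat \<Rightarrow> real)) set" where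
  "scp_feasible \<Omega> ny nI nx m1 m2 A b D B d =
    {(y, x). (\<forall>j. 0 \<le> y j) \<and> (\<forall>j\<ge>ny. y j = 0)
       \<and> (\<forall>j<nI. y j \<in> \<int>)
       \<and> (\<forall>r<m1. (\<Sum>j<ny. A r j * y j) = b r)
       \<and> (\<forall>w j. 0 \<le> x w j) \<and> (\<forall>w j. (w \<notin> \<Omega> \<or> nx \<le> j) \<longrightarrow> x w j = 0)
       \<and> (\<forall>w\<in>\<Omega>. \<forall>r<m2. (\<Sum>j<nx. B w r j * x w j) + (\<Sum>j<ny. D r j * y j) = d w r)}"

text \<open>Extreme point of a set of pairs of functions (the library notion
  extreme_point_of, written out pointwise since functions carry no real_vector structure).\<close>
definition is_extreme_point ::
  "((nat \<Rightarrow> real) \<times> ('w \<Rightarrow> nat \<Rightarrow> real)) set \<Rightarrow>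
   (nat \<Rightarrow> real) \<times> ('w \<Rightarrow> nat \<Rightarrow> real) \<Rightarrow> bool" where
  "is_extreme_point S p \<longleftrightarrow> p \<in> S \<and>
     (\<forall>a\<in>S. \<forall>c\<in>S. \<forall>u::real. 0 < u \<and> u < 1 \<and>
        fst p = (\<lambda>j. (1 - u) * fst a j + u * fst c j) \<and>
        snd p = (\<lambda>w j. (1 - u) * snd a w j + u * snd c w j) \<longrightarrow> a = c)"

text \<open>Piecewise linear interpolant of f through breakpoints B (a finite set of reals),
  for arguments in [Min B, Max B]: f itself at breakpoints, linear interpolation
  between consecutive breakpoints otherwise.\<close>
definition pwl :: "(real \<Rightarrow> real) \<Rightarrow> real set \<Rightarrow> real \<Rightarrow> real" where
  "pwl f B t = (if t \<in> B then f t else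
     (let a = Max {v\<in>B. v < t}; c = Min {v\<in>B. t < v}
      in (f c - f a) / (c - a) * (t - a) + f a))"

definition scp_obj ::
  "'w set \<Rightarrow> nat \<Rightarrow> nat \<Rightarrow> (nat \<Rightarrow> real \<Rightarrow> real) \<Rightarrow> ('w \<Rightarrow> real) \<Rightarrow> ('w \<Rightarrow> nat \<Rightarrow> real) \<Rightarrow>
   (nat \<Rightarrow> real) \<times> ('w \<Rightarrow> nat \<Rightarrow> real) \<Rightarrow> real" where
  "scp_obj \<Omega> ny nx g p c yx =
     (\<Sum>i<ny. g i (fst yx i)) + (\<Sum>w\<in>\<Omega>. p w * (\<Sum>j<nx. c w j * snd yx w j))"

end

theory Submission
  imports Defs
begin

(* Concavity makes the interpolant of f i through any breakpoint set an underestimator of f i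
   between two breakpoints, and the initial breakpoints ylo i, yhi i bracket every feasible y i.
   So once the interpolant is tight at a minimiser of the interpolated problem, that point is a
   global minimiser.
   For termination, an extreme point z of its integer fibre is determined by its integer part and
   its support: if z' lies in the same fibre and has no larger support, then a point slightly
   beyond z on the line from z' through z is still feasible, so z is an inner point of a segment
   unless z = z'. Integer parts are bounded, hence only finitely many iterates occur, and every
   iteration that does not stop adds one of their coordinates as a new breakpoint. *)

lemma eventually_at_right_0_scaled_less:
  fixes g h :: "'a \<Rightarrow> real"
  assumes "finite J" and "\<And>j. j \<in> J \<Longrightarrow> 0 < g j"
  shows "eventually (\<lambda>t. \<forall>j\<in>J. t * h j < g j) (at_right 0)"
proof (rule eventually_ball_finite[OF \<open>finite J\<close>], intro ballI)
  fix j assume "j \<in> J"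
  have "((\<lambda>t. t * h j) \<longlongrightarrow> 0 * h j) (at_right 0)"
    by (intro tendsto_intros)
  then show "eventually (\<lambda>t. t * h j < g j) (at_right 0)"
    using assms(2)[OF \<open>j \<in> J\<close>] by (simp add: order_tendstoD(2))
qed

lemma no_strict_chain_in_finite_set:
  assumes "finite A" and "\<And>k. G k \<subseteq> A"
  shows "\<exists>k. \<not> G k \<subset> G (Suc k)"
proof (rule ccontr)
  assume "\<nexists>k. \<not> G k \<subset> G (Suc k)"
  moreover have "finite (G k)" for k
    using assms finite_subset by blast
  ultimately have "strict_mono (card \<circ> G)"
    by (simp add: strict_mono_Suc_iff psubset_card_mono)
  then have "Suc (card A) \<le> card (G (Suc (card A)))"
    by (metis comp_apply strict_mono_imp_increasing)
  moreover have "card (G (Suc (card A))) \<le> card A"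
    using assms by (intro card_mono) auto
  ultimately show False by simp
qed

lemma pwl_at_breakpoint [simp]: "t \<in> B \<Longrightarrow> pwl f B t = f t"
  by (simp add: pwl_def)

lemma pwl_le_concave:
  assumes "concave_on UNIV f" and "finite B" and "a \<in> B" and "c \<in> B" and "a \<le> t" and "t \<le> c"
  shows "pwl f B t \<le> f t"
proof (cases "t \<in> B")
  case True
  then show ?thesis by simp
next
  case False
  define a' where "a' = Max {v\<in>B. v < t}"
  define c' where "c' = Min {v\<in>B. t < v}"
  have "a \<in> {v\<in>B. v < t}" and "c \<in> {v\<in>B. t < v}"
    using assms False by (auto simp: order_le_less)
  then have "a' \<in> {v\<in>B. v < t}" "c' \<in> {v\<in>B. t < v}"
    using \<open>finite B\<close> unfolding a'_def c'_def by (intro Max_in Min_in; auto)+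
  then have "a' < t" "t < c'" by auto
  define u where "u = (t - a') / (c' - a')"
  have "0 \<le> u" "u \<le> 1"
    using \<open>a' < t\<close> \<open>t < c'\<close> by (auto simp: u_def divide_simps)
  have "u * (c' - a') = t - a'"
    using \<open>a' < t\<close> \<open>t < c'\<close> by (simp add: u_def)
  then have "t = (1 - u) *\<^sub>R a' + u *\<^sub>R c'"
    by (simp add: algebra_simps)
  then have "(1 - u) * f a' + u * f c' \<le> f t"
    using concave_onD[OF assms(1) \<open>0 \<le> u\<close> \<open>u \<le> 1\<close>] by simp
  moreover have "pwl f B t = u * (f c' - f a') + f a'"
    using False by (simp add: pwl_def Let_def a'_def c'_def u_def)
  ultimately show ?thesis by (simp add: algebra_simps)
qed

type_synonym 'w scp_point = "(nat \<Rightarrow> real) \<times> ('w \<Rightarrow> nat \<Rightarrow> real)"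

definition affine_comb :: "real \<Rightarrow> 'w scp_point \<Rightarrow> 'w scp_point \<Rightarrow> 'w scp_point" where
  "affine_comb u a c =
     (\<lambda>j. (1 - u) * fst a j + u * fst c j, \<lambda>w j. (1 - u) * snd a w j + u * snd c w j)"

definition nonneg_point :: "'w scp_point \<Rightarrow> bool" where
  "nonneg_point z \<longleftrightarrow> (\<forall>j. 0 \<le> fst z j) \<and> (\<forall>w j. 0 \<le> snd z w j)"

lemma affine_comb_same [simp]: "affine_comb u c c = c"
  by (simp add: affine_comb_def algebra_simps)

lemma is_extreme_point_iff:
  "is_extreme_point S p \<longleftrightarrow>
     p \<in> S \<and> (\<forall>a\<in>S. \<forall>c\<in>S. \<forall>u. 0 < u \<and> u < 1 \<and> p = affine_comb u a c \<longrightarrow> a = c)"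
  by (simp add: is_extreme_point_def affine_comb_def prod_eq_iff)

lemma sum_affine_comb:
  fixes a x x' :: "'a \<Rightarrow> real"
  shows
  "(\<Sum>j\<in>J. a j * ((1 - u) * x j + u * x' j)) = (1 - u) * (\<Sum>j\<in>J. a j * x j) + u * (\<Sum>j\<in>J. a j * x' j)"
  by (simp add: distrib_left sum.distrib sum_distrib_left mult.left_commute)

lemma extreme_point_eq_if_support_subset:
  fixes z z' :: "'w scp_point"
  assumes ext: "is_extreme_point S z" and "z' \<in> S"
    and closed: "\<And>u. nonneg_point (affine_comb u z z') \<Longrightarrow> affine_comb u z z' \<in> S"
    and nonneg: "nonneg_point z" "nonneg_point z'"
    and fin_y: "finite {j. 0 < fst z' j}" and fin_x: "finite {(w, j). 0 < snd z' w j}"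
    and supp_y: "\<And>j. 0 < fst z' j \<Longrightarrow> 0 < fst z j"
    and supp_x: "\<And>w j. 0 < snd z' w j \<Longrightarrow> 0 < snd z w j"
  shows "z = z'"
proof -
  have "eventually (\<lambda>t. 0 < t \<and> (\<forall>j\<in>{j. 0 < fst z' j}. t * fst z' j < fst z j) \<and>
      (\<forall>q\<in>{(w, j). 0 < snd z' w j}. t * case_prod (snd z') q < case_prod (snd z) q)) (at_right 0)"
    using supp_y supp_x
    by (intro eventually_conj eventually_at_right_less eventually_at_right_0_scaled_less fin_y fin_x) auto
  then obtain t where "0 < t"
    and t_y: "\<And>j. 0 < fst z' j \<Longrightarrow> t * fst z' j < fst z j"
    and t_x: "\<And>w j. 0 < snd z' w j \<Longrightarrow> t * snd z' w j < snd z w j"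
    using eventually_happens'[OF trivial_limit_at_right_real] by force
  \<comment> \<open>a = (1 + t) z - t z' is nonnegative, hence in S, and z lies strictly between a and z'.\<close>
  define a where "a = affine_comb (- t) z z'"
  have scaled_le: "t * r' \<le> (1 + t) * r" if "0 \<le> r" "0 \<le> r'" "0 < r' \<Longrightarrow> t * r' < r" for r r'
  proof (cases "0 < r'")
    case True
    with that \<open>0 < t\<close> have "t * r' < r" "0 \<le> t * r" by auto
    then show ?thesis by (simp add: distrib_right)
  next
    case False
    with that \<open>0 < t\<close> show ?thesis by simp
  qed
  have "t * fst z' j \<le> (1 + t) * fst z j" for j
    using nonneg t_y by (intro scaled_le) (auto simp: nonneg_point_def)
  moreover have "t * snd z' w j \<le> (1 + t) * snd z w j" for w j
    using nonneg t_x by (intro scaled_le) (auto simp: nonneg_point_def)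
  ultimately have "a \<in> S"
    unfolding a_def by (intro closed) (simp add: affine_comb_def nonneg_point_def algebra_simps)
  define u where "u = t / (1 + t)"
  have "0 < u" "u < 1"
    using \<open>0 < t\<close> by (auto simp: u_def)
  have "(1 - u) * (1 + t) = 1" "(1 - u) * t = u"
    using \<open>0 < t\<close> by (simp_all add: u_def field_simps)
  then have "(1 - u) * ((1 + t) * r - t * r') + u * r' = r" for r r'
    by (simp add: right_diff_distrib mult.assoc[symmetric])
  then have "z = affine_comb u a z'"
    by (simp add: a_def affine_comb_def)
  then have "a = z'"
    using ext \<open>a \<in> S\<close> \<open>z' \<in> S\<close> \<open>0 < u\<close> \<open>u < 1\<close> by (auto simp: is_extreme_point_iff)
  with \<open>z = affine_comb u a z'\<close> show "z = z'" by simp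
qed

lemma scp_fiber_affine_comb_closed:
  fixes q q' :: "'w scp_point"
  assumes "q \<in> {z \<in> scp_feasible \<Omega> ny nI nx m1 m2 A b D B d. \<forall>i<nI. fst z i = v i}"
    and "q' \<in> {z \<in> scp_feasible \<Omega> ny nI nx m1 m2 A b D B d. \<forall>i<nI. fst z i = v i}"
    and "nonneg_point (affine_comb u q q')"
  shows "affine_comb u q q' \<in> {z \<in> scp_feasible \<Omega> ny nI nx m1 m2 A b D B d. \<forall>i<nI. fst z i = v i}"
proof -
  obtain y x where q: "q = (y, x)" by fastforce
  obtain y' x' where q': "q' = (y', x')" by fastforce
  have "(1 - u) * r + u * r = r" and
    "(1 - u) * P + u * P' + ((1 - u) * Q + u * Q') = (1 - u) * (P + Q) + u * (P' + Q')"
    for r P P' Q Q' :: real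
    by (simp_all add: algebra_simps)
  then show ?thesis
    using assms unfolding scp_feasible_def affine_comb_def nonneg_point_def q q'
    by (clarsimp simp: sum_affine_comb)
qed

lemma scp_feasible_nonneg: "z \<in> scp_feasible \<Omega> ny nI nx m1 m2 A b D B d \<Longrightarrow> nonneg_point z"
  by (auto simp: scp_feasible_def nonneg_point_def)

lemma scp_feasible_support:
  assumes "z \<in> scp_feasible \<Omega> ny nI nx m1 m2 A b D B d"
  shows "{j. 0 < fst z j} \<subseteq> {..<ny}" and "{(w, j). 0 < snd z w j} \<subseteq> \<Omega> \<times> {..<nx}"
proof (safe)
  fix j assume "0 < fst z j"
  with assms show "j < ny" by (cases "j < ny") (auto simp: scp_feasible_def)
next
  fix w j assume "0 < snd z w j"
  with assms show "w \<in> \<Omega>" "j < nx"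
    by (cases "w \<in> \<Omega> \<and> j < nx"; auto simp: scp_feasible_def)+
qed

lemma finite_scp_fiber_extreme_points:
  assumes "finite \<Omega>"
    and bounded: "\<forall>z\<in>scp_feasible \<Omega> ny nI nx m1 m2 A b D B d. \<forall>i<nI. \<bar>fst z i\<bar> \<le> M"
  shows "finite {z. is_extreme_point
           {q \<in> scp_feasible \<Omega> ny nI nx m1 m2 A b D B d. \<forall>i<nI. fst q i = fst z i} z}"
    (is "finite ?E")
proof -
  let ?X = "scp_feasible \<Omega> ny nI nx m1 m2 A b D B d"
  define key :: "'a scp_point \<Rightarrow> _" where
    "key z = (map (fst z) [0..<nI], {j. 0 < fst z j}, {(w, j). 0 < snd z w j})" for z
  have E_X: "z \<in> ?X" if "z \<in> ?E" for z
    using that by (simp add: is_extreme_point_def)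
  have key_inj: "inj_on key ?E"
  proof (rule inj_onI)
    fix z z' assume "z \<in> ?E" "z' \<in> ?E" "key z = key z'"
    then have same_int: "\<forall>i<nI. fst z' i = fst z i"
      and supp_y: "{j. 0 < fst z j} = {j. 0 < fst z' j}"
      and supp_x: "{(w, j). 0 < snd z w j} = {(w, j). 0 < snd z' w j}"
      by (auto simp: key_def map_eq_conv)
    let ?F = "{q \<in> ?X. \<forall>i<nI. fst q i = fst z i}"
    have "z \<in> ?F" "z' \<in> ?F"
      using E_X \<open>z \<in> ?E\<close> \<open>z' \<in> ?E\<close> same_int by auto
    show "z = z'"
    proof (rule extreme_point_eq_if_support_subset)
      show "is_extreme_point ?F z" using \<open>z \<in> ?E\<close> by simp
      show "affine_comb u z z' \<in> ?F" if "nonneg_point (affine_comb u z z')" for u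
        using \<open>z \<in> ?F\<close> \<open>z' \<in> ?F\<close> that by (rule scp_fiber_affine_comb_closed)
      show "finite {j. 0 < fst z' j}"
        using scp_feasible_support(1)[OF E_X[OF \<open>z' \<in> ?E\<close>]] by (rule finite_subset) simp
      show "finite {(w, j). 0 < snd z' w j}"
        using scp_feasible_support(2)[OF E_X[OF \<open>z' \<in> ?E\<close>]] by (rule finite_subset) (simp add: \<open>finite \<Omega>\<close>)
      show "0 < fst z j" if "0 < fst z' j" for j
        using that supp_y by blast
      show "0 < snd z w j" if "0 < snd z' w j" for w j
        using that supp_x by blast
      show "nonneg_point z" "nonneg_point z'"
        using E_X \<open>z \<in> ?E\<close> \<open>z' \<in> ?E\<close> by (blast intro: scp_feasible_nonneg)+
    qed fact
  qed
  let ?K = "{xs. set xs \<subseteq> {k \<in> \<int>. \<bar>k\<bar> \<le> M} \<and> length xs = nI}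
      \<times> Pow {..<ny} \<times> Pow (\<Omega> \<times> {..<nx})"
  have "key ` ?E \<subseteq> ?K"
  proof (rule image_subsetI)
    fix z assume "z \<in> ?E"
    then have "z \<in> ?X" by (rule E_X)
    then have "\<forall>i<nI. fst z i \<in> \<int>"
      by (auto simp: scp_feasible_def)
    with bounded \<open>z \<in> ?X\<close> have "set (map (fst z) [0..<nI]) \<subseteq> {k \<in> \<int>. \<bar>k\<bar> \<le> M}"
      by auto
    with scp_feasible_support[OF \<open>z \<in> ?X\<close>] show "key z \<in> ?K"
      by (simp add: key_def)
  qed
  moreover have "finite ?K"
    using \<open>finite \<Omega>\<close> by (simp add: finite_lists_length_eq finite_abs_int_segment)
  ultimately have "finite (key ` ?E)"
    by (rule finite_subset)
  then show ?thesis
    using key_inj by (rule finite_imageD)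
qed

lemma scp_obj_mono:
  "(\<And>i. i < ny \<Longrightarrow> g i (fst z i) \<le> h i (fst z i)) \<Longrightarrow>
     scp_obj \<Omega> ny nx g p c z \<le> scp_obj \<Omega> ny nx h p c z"
  by (auto simp: scp_obj_def intro!: sum_mono)

locale breakpoint_refinement =
  fixes n :: nat and f :: "nat \<Rightarrow> real \<Rightarrow> real" and y :: "nat \<Rightarrow> nat \<Rightarrow> real"
    and Bp :: "nat \<Rightarrow> nat \<Rightarrow> real set" and stop :: "nat \<Rightarrow> bool"
  assumes stop_iff: "stop s \<longleftrightarrow> (\<forall>i<n. f i (y s i) \<le> pwl (f i) (Bp s i) (y s i))"
    and finite_init: "i < n \<Longrightarrow> finite (Bp 1 i)"
    and update: "1 \<le> s \<Longrightarrow> (\<forall>s'\<in>{1..<s}. \<not> stop s') \<Longrightarrow> \<not> stop s \<Longrightarrow> i < n \<Longrightarrow>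
      Bp (Suc s) i = (if pwl (f i) (Bp s i) (y s i) < f i (y s i)
                      then insert (y s i) (Bp s i) else Bp s i)"
begin

definition reached :: "nat \<Rightarrow> bool" where
  "reached s \<longleftrightarrow> 1 \<le> s \<and> (\<forall>s'\<in>{1..<s}. \<not> stop s')"

lemma reached_Suc: "reached (Suc s) \<longleftrightarrow> s = 0 \<or> reached s \<and> \<not> stop s"
  by (auto simp: reached_def less_Suc_eq)

lemma breakpoints_between:
  assumes "reached s" and "i < n"
  shows "Bp 1 i \<subseteq> Bp s i \<and> Bp s i \<subseteq> Bp 1 i \<union> (\<lambda>s'. y s' i) ` {1..<s}"
  using assms(1)
proof (induction s)
  case 0
  then show ?case by (simp add: reached_def)
next
  case (Suc s)
  show ?case
  proof (cases "s = 0")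
    case True
    then show ?thesis by simp
  next
    case False
    with Suc.prems have "reached s" "\<not> stop s"
      by (auto simp: reached_Suc)
    then have "Bp s i \<subseteq> Bp (Suc s) i" "Bp (Suc s) i \<subseteq> insert (y s i) (Bp s i)"
      using update[of s i] \<open>i < n\<close> by (auto simp: reached_def)
    moreover have "{1..<Suc s} = insert s {1..<s}"
      using False by auto
    ultimately show ?thesis
      using Suc.IH[OF \<open>reached s\<close>] by auto
  qed
qed

lemma finite_breakpoints: "reached s \<Longrightarrow> i < n \<Longrightarrow> finite (Bp s i)"
  using breakpoints_between finite_init
  by (meson finite_Un finite_atLeastLessThan finite_imageI finite_subset)

lemma stops_if_finitely_many_iterates:
  assumes "finite (y ` Collect reached)"
  shows "\<exists>s. reached s \<and> stop s"
proof (rule ccontr)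
  assume never: "\<nexists>s. reached s \<and> stop s"
  then have reached: "reached s" if "1 \<le> s" for s
    using that by (induction s) (auto simp: reached_Suc)
  define G where "G k = Sigma {..<n} (Bp (Suc k))" for k
  define A where "A = Sigma {..<n} (\<lambda>i. Bp 1 i \<union> (\<lambda>s. y s i) ` Collect reached)"
  have "finite ((\<lambda>s. y s i) ` Collect reached)" for i
    using finite_imageI[OF assms, of "\<lambda>v. v i"] by (simp add: image_image)
  then have "finite A"
    using finite_init unfolding A_def by (intro finite_SigmaI) auto
  moreover have "G k \<subseteq> A" for k
  proof -
    have "(\<lambda>s. y s i) ` {1..<Suc k} \<subseteq> (\<lambda>s. y s i) ` Collect reached" for i
      using reached by (intro image_mono) auto
    moreover have "reached (Suc k)"
      by (simp add: reached)
    ultimately have "Bp (Suc k) i \<subseteq> Bp 1 i \<union> (\<lambda>s. y s i) ` Collect reached" if "i < n" for i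
      using breakpoints_between[OF _ that] by blast
    then show ?thesis
      unfolding G_def A_def by (intro Sigma_mono) auto
  qed
  ultimately obtain k where "\<not> G k \<subset> G (Suc k)"
    using no_strict_chain_in_finite_set[of A G] by blast
  moreover have "G k \<subset> G (Suc k)"
  proof -
    have "\<not> stop (Suc k)"
      using never reached[of "Suc k"] by auto
    then obtain i where "i < n" and new: "pwl (f i) (Bp (Suc k) i) (y (Suc k) i) < f i (y (Suc k) i)"
      by (auto simp: stop_iff not_le)
    have upd: "Bp (Suc (Suc k)) i' = (if pwl (f i') (Bp (Suc k) i') (y (Suc k) i') < f i' (y (Suc k) i')
        then insert (y (Suc k) i') (Bp (Suc k) i') else Bp (Suc k) i')" if "i' < n" for i'
      using update[OF _ _ \<open>\<not> stop (Suc k)\<close> that] reached[of "Suc k"] by (simp add: reached_def)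
    then have "G k \<subseteq> G (Suc k)"
      unfolding G_def by auto
    moreover have "y (Suc k) i \<notin> Bp (Suc k) i"
      using new by auto
    with upd[OF \<open>i < n\<close>] new \<open>i < n\<close> have "(i, y (Suc k) i) \<in> G (Suc k) - G k"
      unfolding G_def by simp
    ultimately show ?thesis
      by blast
  qed
  ultimately show False
    by contradiction
qed

lemma pwl_le_between_initial_breakpoints:
  assumes "reached s" and "i < n" and "concave_on UNIV (f i)"
    and "a \<in> Bp 1 i" and "c \<in> Bp 1 i" and "a \<le> t" and "t \<le> c"
  shows "pwl (f i) (Bp s i) t \<le> f i t"
  using assms breakpoints_between[OF assms(1,2)]
  by (intro pwl_le_concave[OF _ finite_breakpoints[OF assms(1,2)], of _ a c]) auto

end

theorem theorem3:
  fixes \<Omega> :: "'w set"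
    and ny nI nx m1 m2 :: nat
    and A :: "nat \<Rightarrow> nat \<Rightarrow> real" and b :: "nat \<Rightarrow> real"
    and D :: "nat \<Rightarrow> nat \<Rightarrow> real"
    and p :: "'w \<Rightarrow> real" and c :: "'w \<Rightarrow> nat \<Rightarrow> real"
    and B :: "'w \<Rightarrow> nat \<Rightarrow> nat \<Rightarrow> real" and d :: "'w \<Rightarrow> nat \<Rightarrow> real"
    and f :: "nat \<Rightarrow> real \<Rightarrow> real"
    and ylo yhi :: "nat \<Rightarrow> real"
    and Z :: "nat \<Rightarrow> (nat \<Rightarrow> real) \<times> ('w \<Rightarrow> nat \<Rightarrow> real)"
    and Bp :: "nat \<Rightarrow> nat \<Rightarrow> real set"
  defines "X \<equiv> scp_feasible \<Omega> ny nI nx m1 m2 A b D B d"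
    and "stop \<equiv> (\<lambda>s. \<forall>i<ny. f i (fst (Z s) i) \<le> pwl (f i) (Bp s i) (fst (Z s) i))"
  assumes fin: "finite \<Omega>"
    and nI_le: "nI \<le> ny"
    and X_ne: "X \<noteq> {}"
    and X_bdd: "\<exists>M. \<forall>(y, x)\<in>X. (\<forall>j. \<bar>y j\<bar> \<le> M) \<and> (\<forall>w j. \<bar>x w j\<bar> \<le> M)"
    and y_bnds: "\<forall>(y, x)\<in>X. \<forall>i<ny. ylo i \<le> y i \<and> y i \<le> yhi i"
    and recourse: "\<And>y. (\<forall>j. 0 \<le> y j) \<Longrightarrow> (\<forall>j\<ge>ny. y j = 0) \<Longrightarrow> (\<forall>j<nI. y j \<in> \<int>) \<Longrightarrow>
        (\<forall>r<m1. (\<Sum>j<ny. A r j * y j) = b r) \<Longrightarrow>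
        \<forall>w\<in>\<Omega>. \<exists>x::nat \<Rightarrow> real. (\<forall>j<nx. 0 \<le> x j) \<and>
          (\<forall>r<m2. (\<Sum>j<nx. B w r j * x j) = d w r - (\<Sum>j<ny. D r j * y j))"
    and concave: "\<And>i. i < ny \<Longrightarrow> concave_on UNIV (f i)"
    and lsc: "\<And>i a. i < ny \<Longrightarrow> open {t. a < f i t}"
    and init: "\<And>i. i < ny \<Longrightarrow> Bp 1 i = {ylo i, yhi i}"
    and solve_opt: "\<And>s. 1 \<le> s \<Longrightarrow> (\<forall>s'\<in>{1..<s}. \<not> stop s') \<Longrightarrow>
        Z s \<in> X \<and>
        (\<forall>z\<in>X. scp_obj \<Omega> ny nx (\<lambda>i. pwl (f i) (Bp s i)) p c (Z s)
                \<le> scp_obj \<Omega> ny nx (\<lambda>i. pwl (f i) (Bp s i)) p c z)"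
    and solve_ext: "\<And>s. 1 \<le> s \<Longrightarrow> (\<forall>s'\<in>{1..<s}. \<not> stop s') \<Longrightarrow>
        is_extreme_point {z\<in>X. \<forall>i<nI. fst z i = fst (Z s) i} (Z s)"
    and update: "\<And>s i. 1 \<le> s \<Longrightarrow> (\<forall>s'\<in>{1..<s}. \<not> stop s') \<Longrightarrow> \<not> stop s \<Longrightarrow> i < ny \<Longrightarrow>
        Bp (Suc s) i = (if pwl (f i) (Bp s i) (fst (Z s) i) < f i (fst (Z s) i)
                        then insert (fst (Z s) i) (Bp s i) else Bp s i)"
  shows "\<exists>s\<ge>1. stop s \<and> (\<forall>s'\<in>{1..<s}. \<not> stop s') \<and> Z s \<in> X \<and>
           (\<forall>z\<in>X. scp_obj \<Omega> ny nx f p c (Z s) \<le> scp_obj \<Omega> ny nx f p c z)"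
proof -
  interpret breakpoint_refinement ny f "\<lambda>s. fst (Z s)" Bp stop
    using init update by unfold_locales (auto simp: stop_def)
  obtain M where "\<forall>(y, x)\<in>X. (\<forall>j. \<bar>y j\<bar> \<le> M) \<and> (\<forall>w j. \<bar>x w j\<bar> \<le> M)"
    using X_bdd by blast
  then have "\<forall>z\<in>X. \<forall>i<nI. \<bar>fst z i\<bar> \<le> M"
    by auto
  then have "finite {z. is_extreme_point {q\<in>X. \<forall>i<nI. fst q i = fst z i} z}" (is "finite ?E")
    unfolding X_def by (rule finite_scp_fiber_extreme_points[OF fin])
  moreover have "Z ` Collect reached \<subseteq> ?E"
    using solve_ext by (auto simp: reached_def)
  ultimately have "finite (fst ` Z ` Collect reached)"
    by (meson finite_imageI finite_subset)
  then obtain s where "reached s" and "stop s"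
    using stops_if_finitely_many_iterates by (auto simp: image_image)
  then have "Z s \<in> X" and pwl_opt: "\<forall>z\<in>X. scp_obj \<Omega> ny nx (\<lambda>i. pwl (f i) (Bp s i)) p c (Z s)
      \<le> scp_obj \<Omega> ny nx (\<lambda>i. pwl (f i) (Bp s i)) p c z"
    using solve_opt by (auto simp: reached_def)
  have "scp_obj \<Omega> ny nx f p c (Z s) \<le> scp_obj \<Omega> ny nx f p c z" if "z \<in> X" for z
  proof -
    have "scp_obj \<Omega> ny nx f p c (Z s) \<le> scp_obj \<Omega> ny nx (\<lambda>i. pwl (f i) (Bp s i)) p c (Z s)"
      using \<open>stop s\<close> by (intro scp_obj_mono) (simp add: stop_def)
    also have "\<dots> \<le> scp_obj \<Omega> ny nx (\<lambda>i. pwl (f i) (Bp s i)) p c z"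
      using pwl_opt that by blast
    also have "\<dots> \<le> scp_obj \<Omega> ny nx f p c z"
    proof (rule scp_obj_mono)
      fix i assume "i < ny"
      with y_bnds that have "ylo i \<le> fst z i" "fst z i \<le> yhi i"
        by (cases z; auto)+
      with \<open>reached s\<close> \<open>i < ny\<close> init show "pwl (f i) (Bp s i) (fst z i) \<le> f i (fst z i)"
        by (intro pwl_le_between_initial_breakpoints concave) auto
    qed
    finally show ?thesis .
  qed
  with \<open>reached s\<close> \<open>stop s\<close> \<open>Z s \<in> X\<close> show ?thesis
    unfolding reached_def by auto
qed

end
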